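(* Let $F$ be a nonempty $\Omega$-decorated rooted forest. Let $A$ be the set of triples $(\sigma,\tau,\rho)$ where, for some $s\ge r\ge1$, $\sigma:\mathcal V(F)\to\{1,\ldots,s\}$ is a surjection with $u<v\Rightarrow\sigma(u)<\sigma(v)$, $\tau:\{1,\ldots,s\}\to\{1,\ldots,r\}$ is a nondecreasing surjection, and $\rho\in\mathrm{qsh}(\tau)$. Let $B$ be the set of triples $(G,\alpha,\beta)$ where $G$ is a covering subforest of $F$, and for some $r,t\ge1$, $\alpha:\mathcal V(F/G)\to\{1,\ldots,r\}$ is a surjection strictly increasing for the order of $F/G$ (i.e. $x<y\Rightarrow\alpha(x)<\alpha(y)$) and $\beta:\mathcal V(G)\to\{1,\ldots,t\}$ is a surjection strictly increasing for the order of $G$. Then there is a bijection $\Phi:A\to B$ such that, whenever $\Phi(\sigma,\tau,\rho)=(G,\alpha,\beta)$, one has $F^{\tau\circ\sigma}=(F/G)^\alpha$ and $F^{\rho\circ\sigma}=G^\beta$.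
   Context: $\Omega$ is a set with a commutative semigroup law written additively, $[a+b]$ the sum. A rooted forest is a finite directed acyclic graph in which each vertex has at most one incoming edge; its vertex set $\mathcal V(F)$ is partially ordered by $u\le v$ iff there is a directed path from a root to $v$ through $u$. An $\Omega$-decorated forest carries a map $d:\mathcal V(F)\to\Omega$. A covering subforest $G$ of $F$ is a partition of $\mathcal V(F)$ into blocks each inducing a connected subgraph, identified with the decorated forest on $\mathcal V(G)=\mathcal V(F)$ obtained by keeping only edges of $F$ inside blocks; $F/G$ is obtained from $F$ by contracting each block to one vertex decorated by the $\Omega$-sum of the decorations of the block. For a decorated forest $H$ and a surjection $\sigma:\mathcal V(H)\to\{1,\ldots,s\}$, $H^\sigma$ is the word $H^\sigma_1\cdots H^\sigma_s$ with $H^\sigma_j=[\sum_{\sigma(v)=j}d(v)]\in\Omega$. For a nondecreasing surjection $\tau:\{1,\ldots,s\}\to\{1,\ldots,r\}$, $\mathrm{qsh}(\tau)$ is the set of surjections $\rho:\{1,\ldots,s\}\to\{1,\ldots,t\}$ (for some $t\le s$) that are strictly increasing on each block $\tau^{-1}(j)$, $j=1,\ldots,r$. *)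

theory Defs
  imports Main "HOL-Library.FuncSet" "HOL-Library.Disjoint_Sets"
begin

definition rforest :: "'v set \<Rightarrow> ('v \<times> 'v) set \<Rightarrow> bool" where
  "rforest V E \<longleftrightarrow> finite V \<and> E \<subseteq> V \<times> V \<and> (\<forall>v. (v, v) \<notin> E\<^sup>+)
     \<and> (\<forall>u w v. (u, v) \<in> E \<and> (w, v) \<in> E \<longrightarrow> u = w)"

text \<open>Sum in a commutative semigroup over a nonempty finite set.\<close>
definition osum :: "('a \<Rightarrow> 'o::ab_semigroup_add) \<Rightarrow> 'a set \<Rightarrow> 'o" where
  "osum d S = the (Finite_Set.fold
      (\<lambda>x acc. Some (case acc of None \<Rightarrow> d x | Some a \<Rightarrow> d x + a)) None S)"

definition block_connected :: "('v \<times> 'v) set \<Rightarrow> 'v set \<Rightarrow> bool" where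
  "block_connected E Bl \<longleftrightarrow>
     (\<forall>u\<in>Bl. \<forall>v\<in>Bl. (u, v) \<in> ((E \<inter> (Bl \<times> Bl)) \<union> (E \<inter> (Bl \<times> Bl))\<inverse>)\<^sup>*)"

text \<open>Covering subforest, given as the partition of V into its blocks.\<close>
definition covering_subforest :: "'v set \<Rightarrow> ('v \<times> 'v) set \<Rightarrow> 'v set set \<Rightarrow> bool" where
  "covering_subforest V E P \<longleftrightarrow> partition_on V P \<and> (\<forall>Bl\<in>P. block_connected E Bl)"

definition sub_edges :: "('v \<times> 'v) set \<Rightarrow> 'v set set \<Rightarrow> ('v \<times> 'v) set" where
  "sub_edges E P = {(u, v). (u, v) \<in> E \<and> (\<exists>Bl\<in>P. u \<in> Bl \<and> v \<in> Bl)}"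

definition quot_edges :: "('v \<times> 'v) set \<Rightarrow> 'v set set \<Rightarrow> ('v set \<times> 'v set) set" where
  "quot_edges E P = {(B1, B2). B1 \<in> P \<and> B2 \<in> P \<and> B1 \<noteq> B2 \<and>
      (\<exists>u\<in>B1. \<exists>v\<in>B2. (u, v) \<in> E)}"

definition strict_incr :: "'a set \<Rightarrow> ('a \<times> 'a) set \<Rightarrow> ('a \<Rightarrow> nat) \<Rightarrow> bool" where
  "strict_incr X R f \<longleftrightarrow> (\<forall>x\<in>X. \<forall>y\<in>X. (x, y) \<in> R\<^sup>+ \<longrightarrow> f x < f y)"

text \<open>f is a surjection X \<rightarrow> {1..k} (extensional: undefined outside X).\<close>
definition surj_onto :: "'a set \<Rightarrow> ('a \<Rightarrow> nat) \<Rightarrow> nat \<Rightarrow> bool" where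
  "surj_onto X f k \<longleftrightarrow> f \<in> X \<rightarrow>\<^sub>E {1..k} \<and> f ` X = {1..k}"

text \<open>The word H^f = H^f_1 ... H^f_k for a surjection f : X \<rightarrow> {1..k}.\<close>
definition word :: "'a set \<Rightarrow> ('a \<Rightarrow> 'o::ab_semigroup_add) \<Rightarrow> ('a \<Rightarrow> nat) \<Rightarrow> 'o list" where
  "word X d f = map (\<lambda>j. osum d {x \<in> X. f x = j}) [1..<card (f ` X) + 1]"

definition setA :: "'v set \<Rightarrow> ('v \<times> 'v) set \<Rightarrow> (('v \<Rightarrow> nat) \<times> (nat \<Rightarrow> nat) \<times> (nat \<Rightarrow> nat)) set" where
  "setA V E = {(\<sigma>, \<tau>, \<rho>). \<exists>s r t. s \<ge> r \<and> r \<ge> 1 \<and>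
      surj_onto V \<sigma> s \<and> strict_incr V E \<sigma> \<and>
      surj_onto {1..s} \<tau> r \<and> (\<forall>i\<in>{1..s}. \<forall>j\<in>{1..s}. i \<le> j \<longrightarrow> \<tau> i \<le> \<tau> j) \<and>
      t \<le> s \<and> surj_onto {1..s} \<rho> t \<and>
      (\<forall>i\<in>{1..s}. \<forall>j\<in>{1..s}. \<tau> i = \<tau> j \<and> i < j \<longrightarrow> \<rho> i < \<rho> j)}"

definition setB :: "'v set \<Rightarrow> ('v \<times> 'v) set \<Rightarrow> ('v set set \<times> ('v set \<Rightarrow> nat) \<times> ('v \<Rightarrow> nat)) set" where
  "setB V E = {(P, \<alpha>, \<beta>). covering_subforest V E P \<and> (\<exists>r t. r \<ge> 1 \<and> t \<ge> 1 \<and>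
      surj_onto P \<alpha> r \<and> strict_incr P (quot_edges E P) \<alpha> \<and>
      surj_onto V \<beta> t \<and> strict_incr V (sub_edges E P) \<beta>)}"

end

theory Submission
  imports Defs "HOL-Library.Product_Lexorder"
begin

text \<open>Both sets are in bijection with the labellings \<open>l : V \<rightarrow> \<nat> \<times> \<nat>\<close> whose two coordinates
  are surjections onto initial segments and which increase lexicographically along every edge of F.
  A triple \<open>(\<sigma>, \<tau>, \<rho>)\<close> gives \<open>l = (\<tau> \<circ> \<sigma>, \<rho> \<circ> \<sigma>)\<close>: monotonicity of \<open>\<tau>\<close> together with
  \<open>\<rho> \<in> qsh(\<tau>)\<close> says precisely that \<open>i \<mapsto> (\<tau> i, \<rho> i)\<close> is lexicographically strictly increasing,
  so \<open>\<sigma>\<close> is recovered as the rank of \<open>l\<close> in its image. A triple \<open>(G, \<alpha>, \<beta>)\<close> gives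
  \<open>l v = (\<alpha> B, \<beta> v)\<close> for the block B of G containing v, and the blocks of G are recovered as the connected components of the edges
  along which the first coordinate of \<open>l\<close> is constant. The words \<open>F\<^sup>\<tau>\<^sup>\<sigma>\<close> and \<open>(F/G)\<^sup>\<alpha>\<close> only
  depend on the first coordinate of \<open>l\<close>, and \<open>F\<^sup>\<rho>\<^sup>\<sigma>\<close> and \<open>G\<^sup>\<beta>\<close> only on the second.\<close>

section \<open>Sums in a commutative semigroup and words\<close>

definition osum_step :: "('a \<Rightarrow> 'o::ab_semigroup_add) \<Rightarrow> 'a \<Rightarrow> 'o option \<Rightarrow> 'o option" where
  "osum_step d x acc = Some (case acc of None \<Rightarrow> d x | Some a \<Rightarrow> d x + a)"

lemma comp_fun_commute_osum_step: "comp_fun_commute (osum_step d)"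
  unfolding comp_fun_commute_def osum_step_def
  by (auto simp: fun_eq_iff add.left_commute add.commute split: option.splits)

lemma fold_osum_step_insert:
  assumes "finite S" "x \<notin> S"
  shows "Finite_Set.fold (osum_step d) None (insert x S) = osum_step d x (Finite_Set.fold (osum_step d) None S)"
proof -
  interpret comp_fun_commute "osum_step d" by (rule comp_fun_commute_osum_step)
  show ?thesis using assms by simp
qed

lemma osum_eq_fold: "osum d S = the (Finite_Set.fold (osum_step d) None S)"
  unfolding osum_def osum_step_def[abs_def] ..

text \<open>The empty sum is the junk value \<open>the None\<close>, whatever the summand.\<close>

lemma osum_empty: "osum d {} = osum d' {}"
  by (simp add: osum_def)

lemma osum_step_not_None: "osum_step d x acc \<noteq> None"
  by (simp add: osum_step_def)

lemma fold_osum_step_not_None: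
  "finite S \<Longrightarrow> S \<noteq> {} \<Longrightarrow> Finite_Set.fold (osum_step d) None S \<noteq> None"
proof (induction S rule: finite_ne_induct)
  case (singleton x)
  show ?case using fold_osum_step_insert[of "{}" x d] by (simp add: osum_step_not_None)
next
  case (insert x S)
  show ?case using fold_osum_step_insert[OF insert.hyps(1,3), of d] by (simp add: osum_step_not_None)
qed

lemma osum_singleton [simp]: "osum d {x} = d x"
proof -
  have "Finite_Set.fold (osum_step d) None {x} = osum_step d x None"
    using fold_osum_step_insert[of "{}" x d] by simp
  then show ?thesis by (simp add: osum_eq_fold osum_step_def)
qed

lemma osum_insert:
  assumes "finite S" "S \<noteq> {}" "x \<notin> S"
  shows "osum d (insert x S) = d x + osum d S"
proof -
  obtain a where "Finite_Set.fold (osum_step d) None S = Some a"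
    using fold_osum_step_not_None[OF assms(1,2)] by blast
  moreover have "Finite_Set.fold (osum_step d) None (insert x S)
      = osum_step d x (Finite_Set.fold (osum_step d) None S)"
    using fold_osum_step_insert[OF assms(1,3)] .
  ultimately show ?thesis by (simp add: osum_eq_fold osum_step_def)
qed

lemma osum_Un_disjoint:
  "finite S \<Longrightarrow> S \<noteq> {} \<Longrightarrow> finite T \<Longrightarrow> T \<noteq> {} \<Longrightarrow> S \<inter> T = {} \<Longrightarrow>
    osum d (S \<union> T) = osum d S + osum d T"
proof (induction S rule: finite_ne_induct)
  case (insert x S)
  then show ?case by (simp add: osum_insert add.assoc)
qed (simp add: osum_insert)

lemma osum_Union_disjoint:
  assumes "finite C" and ne: "\<And>X. X \<in> C \<Longrightarrow> finite X \<and> X \<noteq> {}" and "disjoint C"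
  shows "osum d (\<Union>C) = osum (osum d) C"
proof (cases "C = {}")
  case False
  from \<open>finite C\<close> this ne \<open>disjoint C\<close> show ?thesis
  proof (induction C rule: finite_ne_induct)
    case (insert X C)
    have "X \<inter> \<Union>C = {}"
      using insert.prems(2) insert.hyps(3) by (auto simp: pairwise_def disjnt_def)
    moreover have "\<Union>C \<noteq> {}" "finite (\<Union>C)"
      using insert.hyps(1,2) insert.prems(1) by auto
    ultimately have "osum d (\<Union>(insert X C)) = osum d X + osum d (\<Union>C)"
      using osum_Un_disjoint[of X "\<Union>C" d] insert.prems(1) by simp
    also have "\<dots> = osum d X + osum (osum d) C"
      using insert.IH insert.prems by (simp add: pairwise_insert)
    also have "\<dots> = osum (osum d) (insert X C)"
      using osum_insert[OF insert.hyps(1,2,3), of "osum d"] by simp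
    finally show ?case .
  qed simp
qed (simp add: osum_empty)

lemma image_partition_on_eq:
  assumes "partition_on V P" and \<alpha>: "\<And>B v. B \<in> P \<Longrightarrow> v \<in> B \<Longrightarrow> \<alpha> B = f v"
  shows "\<alpha> ` P = f ` V"
proof
  show "\<alpha> ` P \<subseteq> f ` V"
  proof
    fix a assume "a \<in> \<alpha> ` P"
    then obtain B where B: "B \<in> P" "a = \<alpha> B" by blast
    then obtain v where "v \<in> B" using partition_onD3[OF assms(1)] by (metis ex_in_conv)
    then show "a \<in> f ` V" using B \<alpha> partition_onD1[OF assms(1)] by blast
  qed
  show "f ` V \<subseteq> \<alpha> ` P"
  proof
    fix a assume "a \<in> f ` V"
    then obtain B v where "B \<in> P" "v \<in> B" "a = f v" using partition_onD1[OF assms(1)] by blast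
    then show "a \<in> \<alpha> ` P" using \<alpha> by (metis image_eqI)
  qed
qed

lemma word_cong:
  assumes "\<And>x. x \<in> X \<Longrightarrow> f x = g x"
  shows "word X d f = word X d g"
proof -
  have "f ` X = g ` X" and "\<And>j. {x \<in> X. f x = j} = {x \<in> X. g x = j}"
    using assms by auto
  then show ?thesis unfolding word_def by simp
qed

lemma word_partition:
  assumes "finite V" "partition_on V P" and \<alpha>: "\<And>B v. B \<in> P \<Longrightarrow> v \<in> B \<Longrightarrow> \<alpha> B = f v"
  shows "word V d f = word P (osum d) \<alpha>"
proof -
  have level: "osum d {v \<in> V. f v = j} = osum (osum d) {B \<in> P. \<alpha> B = j}" for j
  proof -
    have "{v \<in> V. f v = j} = \<Union>{B \<in> P. \<alpha> B = j}"
      using \<alpha> partition_onD1[OF assms(2)] by auto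
    also have "osum d \<dots> = osum (osum d) {B \<in> P. \<alpha> B = j}"
    proof (rule osum_Union_disjoint)
      show "finite {B \<in> P. \<alpha> B = j}" using finite_elements[OF assms(1,2)] by simp
      show "disjoint {B \<in> P. \<alpha> B = j}"
        using partition_onD2[OF assms(2)] by (rule pairwise_subset) auto
      show "finite B \<and> B \<noteq> {}" if "B \<in> {B \<in> P. \<alpha> B = j}" for B
        using that assms(1) partition_onD1[OF assms(2)] partition_onD3[OF assms(2)]
        by (auto intro: finite_subset)
    qed
    finally show ?thesis .
  qed
  show ?thesis
    using image_partition_on_eq[OF assms(2) \<alpha>] by (simp add: word_def level)
qed

section \<open>Strictly increasing maps\<close>

lemma strict_incr_iff_edges:
  assumes "R \<subseteq> X \<times> X"
  shows "strict_incr X R f \<longleftrightarrow> (\<forall>(x, y) \<in> R. f x < f y)"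
proof
  assume "strict_incr X R f"
  then show "\<forall>(x, y) \<in> R. f x < f y"
    using assms unfolding strict_incr_def by blast
next
  assume edges: "\<forall>(x, y) \<in> R. f x < f y"
  have "f x < f y" if "(x, y) \<in> R\<^sup>+" for x y
    using that by (induction rule: trancl_induct) (use edges less_trans in blast)+
  then show "strict_incr X R f" unfolding strict_incr_def by blast
qed

lemma strict_mono_on_Pair_lex_iff:
  fixes f :: "'a::linorder \<Rightarrow> 'b::linorder" and g :: "'a \<Rightarrow> 'c::linorder"
  shows "strict_mono_on S (\<lambda>i. (f i, g i)) \<longleftrightarrow>
    (\<forall>i\<in>S. \<forall>j\<in>S. i \<le> j \<longrightarrow> f i \<le> f j) \<and> (\<forall>i\<in>S. \<forall>j\<in>S. f i = f j \<and> i < j \<longrightarrow> g i < g j)"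
  unfolding strict_mono_on_def by (auto simp: le_less) (metis less_le_not_le)+

definition sorted_enum :: "'a::linorder set \<Rightarrow> nat \<Rightarrow> 'a" where
  "sorted_enum S i = sorted_list_of_set S ! (i - 1)"

lemma strict_mono_on_sorted_enum: "strict_mono_on {1..card S} (sorted_enum S)"
proof (cases "finite S")
  case True
  then show ?thesis
    using strict_sorted_list_of_set[of S]
    by (auto intro!: strict_mono_onI simp: sorted_enum_def sorted_wrt_iff_nth_less)
qed simp

lemma sorted_enum_image: "finite S \<Longrightarrow> sorted_enum S ` {1..card S} = S"
proof -
  assume "finite S"
  have "sorted_enum S ` {1..card S} = sorted_enum S ` Suc ` {..<card S}"
    by (simp add: image_Suc_lessThan)
  also have "\<dots> = (!) (sorted_list_of_set S) ` {0..<length (sorted_list_of_set S)}"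
    unfolding image_image by (simp add: sorted_enum_def lessThan_atLeast0)
  also have "\<dots> = S" using \<open>finite S\<close> by (simp add: nth_image)
  finally show ?thesis .
qed

lemma bij_betw_sorted_enum: "finite S \<Longrightarrow> bij_betw (sorted_enum S) {1..card S} S"
  unfolding bij_betw_def
  using strict_mono_on_imp_inj_on[OF strict_mono_on_sorted_enum] sorted_enum_image by blast

lemma sorted_enum_strict_mono_image:
  fixes h :: "nat \<Rightarrow> 'a::linorder"
  assumes h: "strict_mono_on {1..n} h" and i: "i \<in> {1..n}"
  shows "sorted_enum (h ` {1..n}) i = h i"
proof -
  let ?L = "map h [1..<Suc n]"
  have "length ?L = card (h ` {1..n})"
    using card_image[OF strict_mono_on_imp_inj_on[OF h]] by simp
  moreover have "sorted_wrt (<) ?L"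
    unfolding sorted_wrt_map
    by (rule sorted_wrt_mono_rel[OF _ sorted_wrt_upt]) (auto intro: strict_mono_onD[OF h])
  moreover have "set ?L = h ` {1..n}"
    by (simp only: set_map set_upt atLeastLessThanSuc_atLeastAtMost)
  ultimately have "sorted_list_of_set (h ` {1..n}) = ?L"
    by (intro sorted_list_of_set_unique[THEN iffD1]) simp_all
  moreover have "i - 1 < n" "1 + (i - 1) = i" using i by auto
  ultimately show ?thesis by (simp add: sorted_enum_def del: upt_Suc)
qed

lemma sorted_enum_the_inv_into:
  assumes "finite S" "x \<in> S"
  shows "the_inv_into {1..card S} (sorted_enum S) x \<in> {1..card S}"
    and "sorted_enum S (the_inv_into {1..card S} (sorted_enum S) x) = x"
  using bij_betwE[OF bij_betw_the_inv_into[OF bij_betw_sorted_enum[OF assms(1)]]] assms(2)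
    f_the_inv_into_f_bij_betw[OF bij_betw_sorted_enum[OF assms(1)]]
  by blast+

section \<open>Components of the level edges of a labelling\<close>

definition block_of :: "'v set set \<Rightarrow> 'v \<Rightarrow> 'v set" where
  "block_of P v = (THE B. B \<in> P \<and> v \<in> B)"

lemma partition_on_block_unique:
  "partition_on V P \<Longrightarrow> B \<in> P \<Longrightarrow> B' \<in> P \<Longrightarrow> v \<in> B \<Longrightarrow> v \<in> B' \<Longrightarrow> B = B'"
  unfolding partition_on_def pairwise_def disjnt_def by blast

lemma block_of_eq: "partition_on V P \<Longrightarrow> B \<in> P \<Longrightarrow> v \<in> B \<Longrightarrow> block_of P v = B"
  unfolding block_of_def by (rule the_equality) (auto dest: partition_on_block_unique)

definition level_edges :: "('v \<times> 'v) set \<Rightarrow> ('v \<Rightarrow> 'b) \<Rightarrow> ('v \<times> 'v) set" where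
  "level_edges E f = {(u, w) \<in> E. f u = f w}"

definition level_rel :: "'v set \<Rightarrow> ('v \<times> 'v) set \<Rightarrow> ('v \<Rightarrow> 'b) \<Rightarrow> ('v \<times> 'v) set" where
  "level_rel V E f = (level_edges E f \<union> (level_edges E f)\<inverse>)\<^sup>* \<inter> V \<times> V"

definition level_components :: "'v set \<Rightarrow> ('v \<times> 'v) set \<Rightarrow> ('v \<Rightarrow> 'b) \<Rightarrow> 'v set set" where
  "level_components V E f = V // level_rel V E f"

lemma equiv_level_rel: "equiv V (level_rel V E f)"
proof -
  have "sym ((level_edges E f \<union> (level_edges E f)\<inverse>)\<^sup>*)"
    by (rule sym_rtrancl) (auto simp: sym_def)
  then show ?thesis
    unfolding level_rel_def equiv_def refl_on_def sym_def trans_def by (auto intro: rtrancl_trans)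
qed

lemma partition_on_level_components: "partition_on V (level_components V E f)"
  unfolding level_components_def by (rule partition_on_quotient[OF equiv_level_rel])

lemma level_path_imp_eq: "(u, w) \<in> (level_edges E f \<union> (level_edges E f)\<inverse>)\<^sup>* \<Longrightarrow> f u = f w"
  by (induction rule: rtrancl_induct) (auto simp: level_edges_def)

lemma level_components_const:
  assumes "B \<in> level_components V E f" "u \<in> B" "w \<in> B"
  shows "f u = f w"
proof -
  have "(u, w) \<in> level_rel V E f"
    using in_quotient_imp_in_rel[OF equiv_level_rel assms(1)[unfolded level_components_def]] assms(2,3)
    by simp
  then show ?thesis unfolding level_rel_def by (blast intro: level_path_imp_eq)
qed

lemma level_components_closed:
  assumes "E \<subseteq> V \<times> V" "B \<in> level_components V E f" "u \<in> B"
    and "(u, w) \<in> level_edges E f \<union> (level_edges E f)\<inverse>"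
  shows "w \<in> B"
proof -
  have "(u, w) \<in> level_rel V E f"
    using assms(1,4) by (auto simp: level_rel_def level_edges_def)
  then show ?thesis
    by (rule in_quotient_imp_closed[OF equiv_level_rel assms(2)[unfolded level_components_def] assms(3)])
qed

lemma level_components_connected:
  assumes EV: "E \<subseteq> V \<times> V" and B: "B \<in> level_components V E f"
  shows "block_connected E B"
  unfolding block_connected_def
proof (intro ballI)
  fix u w assume u: "u \<in> B" and w: "w \<in> B"
  have "(u, w) \<in> level_rel V E f"
    using in_quotient_imp_in_rel[OF equiv_level_rel B[unfolded level_components_def]] u w by simp
  then have "(u, w) \<in> (level_edges E f \<union> (level_edges E f)\<inverse>)\<^sup>*"
    by (simp add: level_rel_def)
  then have "w \<in> B \<and> (u, w) \<in> ((E \<inter> B \<times> B) \<union> (E \<inter> B \<times> B)\<inverse>)\<^sup>*"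
  proof (induction rule: rtrancl_induct)
    case (step y z)
    have "z \<in> B" using level_components_closed[OF EV B _ step.hyps(2)] step.IH by blast
    then have "(y, z) \<in> (E \<inter> B \<times> B) \<union> (E \<inter> B \<times> B)\<inverse>"
      using step.hyps(2) step.IH by (auto simp: level_edges_def)
    then show ?case using \<open>z \<in> B\<close> step.IH by (meson rtrancl.rtrancl_into_rtrancl)
  qed (use u in simp)
  then show "(u, w) \<in> ((E \<inter> B \<times> B) \<union> (E \<inter> B \<times> B)\<inverse>)\<^sup>*" by blast
qed

lemma level_components_eq_partition:
  assumes P: "partition_on V P" and conn: "\<And>B. B \<in> P \<Longrightarrow> block_connected E B"
    and const: "\<And>B u w. B \<in> P \<Longrightarrow> u \<in> B \<Longrightarrow> w \<in> B \<Longrightarrow> f u = f w"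
    and inner: "\<And>u w. (u, w) \<in> E \<Longrightarrow> f u = f w \<Longrightarrow> \<exists>B\<in>P. u \<in> B \<and> w \<in> B"
  shows "level_components V E f = P"
proof -
  have same_block: "\<exists>B\<in>P. x \<in> B \<and> y \<in> B" if "(x, y) \<in> level_rel V E f" for x y
  proof -
    have path: "(x, y) \<in> (level_edges E f \<union> (level_edges E f)\<inverse>)\<^sup>*" and "x \<in> V"
      using that by (auto simp: level_rel_def)
    then obtain B where B: "B \<in> P" "x \<in> B" using partition_onD1[OF P] by blast
    from path have "y \<in> B"
    proof (induction rule: rtrancl_induct)
      case (step y z)
      from step.hyps(2) have "(y, z) \<in> E \<and> f y = f z \<or> (z, y) \<in> E \<and> f z = f y"
        by (auto simp: level_edges_def)
      then obtain B' where "B' \<in> P" "y \<in> B'" "z \<in> B'" using inner by blast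
      then show ?case using partition_on_block_unique[OF P B(1)] step.IH by blast
    qed (use B in simp)
    then show ?thesis using B by blast
  qed
  have level_rel: "(x, y) \<in> level_rel V E f" if "B \<in> P" "x \<in> B" "y \<in> B" for x y B
  proof -
    have "(E \<inter> B \<times> B) \<union> (E \<inter> B \<times> B)\<inverse> \<subseteq> level_edges E f \<union> (level_edges E f)\<inverse>"
      using const[OF that(1)] by (auto simp: level_edges_def)
    then have "(x, y) \<in> (level_edges E f \<union> (level_edges E f)\<inverse>)\<^sup>*"
      using conn[OF that(1)] that(2,3) rtrancl_mono unfolding block_connected_def by blast
    moreover have "x \<in> V" "y \<in> V" using that partition_onD1[OF P] by auto
    ultimately show ?thesis by (simp add: level_rel_def)
  qed
  have "level_rel V E f = {(x, y). \<exists>B\<in>P. x \<in> B \<and> y \<in> B}"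
    using same_block level_rel by auto
  then show ?thesis
    unfolding level_components_def using partition_on_eq_quotient[OF P] by simp
qed

section \<open>Lexicographic labellings\<close>

lemma surj_onto_image: "surj_onto X f k \<Longrightarrow> f ` X = {1..k}"
  unfolding surj_onto_def by blast

lemma surj_onto_restrict: "surj_onto X f k \<Longrightarrow> restrict f X = f"
  unfolding surj_onto_def by (simp add: PiE_iff extensional_restrict)

lemma surj_onto_restrictI: "g ` X = {1..k} \<Longrightarrow> surj_onto X (restrict g X) k"
  unfolding surj_onto_def by auto

definition lex_labellings :: "'v set \<Rightarrow> ('v \<times> 'v) set \<Rightarrow> ('v \<Rightarrow> nat \<times> nat) set" where
  "lex_labellings V E = {l \<in> extensional V. (\<exists>r. fst ` l ` V = {1..r}) \<and> (\<exists>t. snd ` l ` V = {1..t})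
     \<and> (\<forall>(u, w) \<in> E. l u < l w)}"

lemma lex_labellingsI:
  assumes "l \<in> extensional V" "fst ` l ` V = {1..r}" "snd ` l ` V = {1..t}"
    and "\<And>u w. (u, w) \<in> E \<Longrightarrow> l u < l w"
  shows "l \<in> lex_labellings V E"
  using assms unfolding lex_labellings_def by auto

lemma lex_labellingsE:
  assumes "l \<in> lex_labellings V E"
  obtains r t where "l \<in> extensional V" "fst ` l ` V = {1..r}" "snd ` l ` V = {1..t}"
    and "\<And>u w. (u, w) \<in> E \<Longrightarrow> l u < l w"
  using assms unfolding lex_labellings_def by (elim CollectE conjE exE) (rule that; blast)

lemma setA_iff_lex:
  "(\<sigma>, \<tau>, \<rho>) \<in> setA V E \<longleftrightarrow> (\<exists>s r t. r \<ge> 1 \<and> s \<ge> r \<and> t \<le> s \<and>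
     surj_onto V \<sigma> s \<and> strict_incr V E \<sigma> \<and> surj_onto {1..s} \<tau> r \<and> surj_onto {1..s} \<rho> t \<and>
     strict_mono_on {1..s} (\<lambda>i. (\<tau> i, \<rho> i)))"
  unfolding setA_def strict_mono_on_Pair_lex_iff mem_Collect_eq prod.case
  by (intro iffI; elim exE conjE; intro exI conjI; assumption)

section \<open>Triples \<open>(\<sigma>, \<tau>, \<rho>)\<close> as labellings\<close>

definition labelA :: "'v set \<Rightarrow> ('v \<Rightarrow> nat) \<times> (nat \<Rightarrow> nat) \<times> (nat \<Rightarrow> nat) \<Rightarrow> 'v \<Rightarrow> nat \<times> nat" where
  "labelA V = (\<lambda>(\<sigma>, \<tau>, \<rho>). restrict (\<lambda>v. (\<tau> (\<sigma> v), \<rho> (\<sigma> v))) V)"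

definition unlabelA :: "'v set \<Rightarrow> ('v \<Rightarrow> nat \<times> nat) \<Rightarrow> ('v \<Rightarrow> nat) \<times> (nat \<Rightarrow> nat) \<times> (nat \<Rightarrow> nat)" where
  "unlabelA V l = (let S = l ` V; n = card S in
     (restrict (the_inv_into {1..n} (sorted_enum S) \<circ> l) V,
      restrict (fst \<circ> sorted_enum S) {1..n}, restrict (snd \<circ> sorted_enum S) {1..n}))"

lemma labelA_in_lex_labellings:
  assumes EV: "E \<subseteq> V \<times> V" and a: "(\<sigma>, \<tau>, \<rho>) \<in> setA V E"
  shows "labelA V (\<sigma>, \<tau>, \<rho>) \<in> lex_labellings V E"
proof -
  obtain s r t where \<sigma>: "surj_onto V \<sigma> s" "strict_incr V E \<sigma>" and \<tau>: "surj_onto {1..s} \<tau> r"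
    and \<rho>: "surj_onto {1..s} \<rho> t" and lex: "strict_mono_on {1..s} (\<lambda>i. (\<tau> i, \<rho> i))"
    using a unfolding setA_iff_lex by blast
  define l where "l = labelA V (\<sigma>, \<tau>, \<rho>)"
  have l: "l v = (\<tau> (\<sigma> v), \<rho> (\<sigma> v))" if "v \<in> V" for v
    using that by (simp add: l_def labelA_def)
  have \<sigma>V: "\<sigma> ` V = {1..s}" by (rule surj_onto_image[OF \<sigma>(1)])
  have "fst ` l ` V = \<tau> ` \<sigma> ` V" "snd ` l ` V = \<rho> ` \<sigma> ` V"
    unfolding image_image by (simp_all add: l cong: image_cong)
  then have img: "fst ` l ` V = {1..r}" "snd ` l ` V = {1..t}"
    using \<sigma>V surj_onto_image[OF \<tau>] surj_onto_image[OF \<rho>] by simp_all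
  have edge: "l u < l w" if "(u, w) \<in> E" for u w
  proof -
    have "u \<in> V" "w \<in> V" using that EV by auto
    then have "\<sigma> u \<in> {1..s}" "\<sigma> w \<in> {1..s}" using \<sigma>V by auto
    moreover have "\<sigma> u < \<sigma> w" using that \<sigma>(2) EV by (auto simp: strict_incr_iff_edges)
    ultimately have "(\<lambda>i. (\<tau> i, \<rho> i)) (\<sigma> u) < (\<lambda>i. (\<tau> i, \<rho> i)) (\<sigma> w)"
      by (rule strict_mono_onD[OF lex])
    then show ?thesis using l \<open>u \<in> V\<close> \<open>w \<in> V\<close> by (simp only:)
  qed
  have "l \<in> extensional V" by (simp add: l_def labelA_def)
  then show ?thesis unfolding l_def[symmetric] using img edge by (rule lex_labellingsI)
qed

lemma unlabelA_labelA:
  assumes a: "(\<sigma>, \<tau>, \<rho>) \<in> setA V E"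
  shows "unlabelA V (labelA V (\<sigma>, \<tau>, \<rho>)) = (\<sigma>, \<tau>, \<rho>)"
proof -
  obtain s r t where \<sigma>: "surj_onto V \<sigma> s" and \<tau>: "surj_onto {1..s} \<tau> r"
    and \<rho>: "surj_onto {1..s} \<rho> t" and lex: "strict_mono_on {1..s} (\<lambda>i. (\<tau> i, \<rho> i))"
    using a unfolding setA_iff_lex by blast
  define l where "l = labelA V (\<sigma>, \<tau>, \<rho>)"
  have \<sigma>V: "\<sigma> ` V = {1..s}" by (rule surj_onto_image[OF \<sigma>])
  have S: "l ` V = (\<lambda>i. (\<tau> i, \<rho> i)) ` {1..s}"
    unfolding \<sigma>V[symmetric] by (force simp: l_def labelA_def)
  have card: "card (l ` V) = s"
    unfolding S using card_image[OF strict_mono_on_imp_inj_on[OF lex]] by simp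
  have enum: "sorted_enum (l ` V) i = (\<tau> i, \<rho> i)" if "i \<in> {1..s}" for i
    unfolding S by (rule sorted_enum_strict_mono_image[OF lex that])
  have inj: "inj_on (sorted_enum (l ` V)) {1..s}"
    using strict_mono_on_imp_inj_on[OF strict_mono_on_sorted_enum] card by metis
  have "the_inv_into {1..s} (sorted_enum (l ` V)) (l v) = \<sigma> v" if "v \<in> V" for v
  proof (rule the_inv_into_f_eq[OF inj])
    show "\<sigma> v \<in> {1..s}" using that \<sigma>V by auto
    then show "sorted_enum (l ` V) (\<sigma> v) = l v" using that enum by (simp add: l_def labelA_def)
  qed
  then have "restrict (the_inv_into {1..s} (sorted_enum (l ` V)) \<circ> l) V = restrict \<sigma> V"
    by (intro restrict_ext) simp
  moreover have "restrict (fst \<circ> sorted_enum (l ` V)) {1..s} = restrict \<tau> {1..s}"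
    "restrict (snd \<circ> sorted_enum (l ` V)) {1..s} = restrict \<rho> {1..s}"
    using enum by (auto intro!: restrict_ext)
  ultimately have "unlabelA V l = (restrict \<sigma> V, restrict \<tau> {1..s}, restrict \<rho> {1..s})"
    unfolding unlabelA_def Let_def card by simp
  then show ?thesis
    unfolding l_def surj_onto_restrict[OF \<sigma>] surj_onto_restrict[OF \<tau>] surj_onto_restrict[OF \<rho>] .
qed

lemma unlabelA_in_setA:
  assumes EV: "E \<subseteq> V \<times> V" and fin: "finite V" and ne: "V \<noteq> {}"
    and l: "l \<in> lex_labellings V E"
  shows "unlabelA V l \<in> setA V E"
proof -
  obtain r t where img: "fst ` l ` V = {1..r}" "snd ` l ` V = {1..t}"
    and edge: "\<And>u w. (u, w) \<in> E \<Longrightarrow> l u < l w"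
    using l by (elim lex_labellingsE) blast
  define S where "S = l ` V"
  define n where "n = card S"
  define e where "e = sorted_enum S"
  have fin_S: "finite S" using fin by (simp add: S_def)
  have e: "bij_betw e {1..n} S" unfolding e_def n_def using bij_betw_sorted_enum[OF fin_S] .
  have mono: "strict_mono_on {1..n} e" unfolding e_def n_def by (rule strict_mono_on_sorted_enum)
  define \<sigma> where "\<sigma> = restrict (the_inv_into {1..n} e \<circ> l) V"
  define \<tau> where "\<tau> = restrict (fst \<circ> e) {1..n}"
  define \<rho> where "\<rho> = restrict (snd \<circ> e) {1..n}"
  have unl: "unlabelA V l = (\<sigma>, \<tau>, \<rho>)"
    by (simp add: unlabelA_def Let_def S_def n_def e_def \<sigma>_def \<tau>_def \<rho>_def)
  have \<sigma>_in: "\<sigma> v \<in> {1..n}" and e_\<sigma>: "e (\<sigma> v) = l v" if "v \<in> V" for v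
    using sorted_enum_the_inv_into[OF fin_S, of "l v"] that by (simp_all add: \<sigma>_def e_def n_def S_def)
  have \<sigma>V: "\<sigma> ` V = {1..n}"
  proof -
    have "\<sigma> ` V = the_inv_into {1..n} e ` S" by (auto simp: \<sigma>_def S_def image_image)
    then show ?thesis using bij_betw_imp_surj_on[OF bij_betw_the_inv_into[OF e]] by simp
  qed
  have fst_S: "fst ` S = {1..r}" and snd_S: "snd ` S = {1..t}" using img by (simp_all add: S_def)
  have "\<tau> ` {1..n} = fst ` e ` {1..n}" "\<rho> ` {1..n} = snd ` e ` {1..n}"
    by (simp_all add: \<tau>_def \<rho>_def image_image comp_def)
  then have \<tau>_img: "\<tau> ` {1..n} = {1..r}" and \<rho>_img: "\<rho> ` {1..n} = {1..t}"
    using bij_betw_imp_surj_on[OF e] fst_S snd_S by simp_all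
  have "r \<ge> 1" using fst_S ne by (auto simp: S_def)
  moreover have "r \<le> n" "t \<le> n"
    using card_image_le[OF fin_S, of fst] card_image_le[OF fin_S, of snd] fst_S snd_S
    by (simp_all add: n_def)
  moreover have "surj_onto V \<sigma> n" "surj_onto {1..n} \<tau> r" "surj_onto {1..n} \<rho> t"
    using \<sigma>V \<tau>_img \<rho>_img by (simp_all add: surj_onto_restrictI \<sigma>_def \<tau>_def \<rho>_def)
  moreover have "strict_incr V E \<sigma>"
    unfolding strict_incr_iff_edges[OF EV]
  proof clarify
    fix u w assume uw: "(u, w) \<in> E"
    then have "u \<in> V" "w \<in> V" using EV by auto
    then have "e (\<sigma> u) < e (\<sigma> w)" using edge[OF uw] e_\<sigma> by simp
    then show "\<sigma> u < \<sigma> w"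
      using strict_mono_on_less[OF mono \<sigma>_in[OF \<open>u \<in> V\<close>] \<sigma>_in[OF \<open>w \<in> V\<close>]] by simp
  qed
  moreover have "strict_mono_on {1..n} (\<lambda>i. (\<tau> i, \<rho> i))"
    using mono by (auto simp: strict_mono_on_def \<tau>_def \<rho>_def)
  ultimately show ?thesis unfolding unl setA_iff_lex by blast
qed

lemma labelA_unlabelA:
  assumes fin: "finite V" and l: "l \<in> lex_labellings V E"
  shows "labelA V (unlabelA V l) = l"
proof
  fix v
  show "labelA V (unlabelA V l) v = l v"
  proof (cases "v \<in> V")
    case True
    then have "l v \<in> l ` V" by simp
    note rank = sorted_enum_the_inv_into[OF finite_imageI[OF fin] this]
    show ?thesis
      using True rank by (simp add: labelA_def unlabelA_def Let_def)
  next
    case False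
    moreover have "l \<in> extensional V" using l by (elim lex_labellingsE)
    ultimately show ?thesis by (simp add: labelA_def unlabelA_def Let_def extensional_def)
  qed
qed

lemma bij_betw_labelA:
  assumes EV: "E \<subseteq> V \<times> V" and fin: "finite V" and ne: "V \<noteq> {}"
  shows "bij_betw (labelA V) (setA V E) (lex_labellings V E)"
proof (rule bij_betw_byWitness[where f' = "unlabelA V"])
  show "\<forall>a\<in>setA V E. unlabelA V (labelA V a) = a"
    using unlabelA_labelA by fast
  show "\<forall>l\<in>lex_labellings V E. labelA V (unlabelA V l) = l"
    using labelA_unlabelA[OF fin] by blast
  show "labelA V ` setA V E \<subseteq> lex_labellings V E"
    using labelA_in_lex_labellings[OF EV] by fast
  show "unlabelA V ` lex_labellings V E \<subseteq> setA V E"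
    using unlabelA_in_setA[OF EV fin ne] by blast
qed

section \<open>Triples \<open>(G, \<alpha>, \<beta>)\<close> as labellings\<close>

definition labelB :: "'v set \<Rightarrow> 'v set set \<times> ('v set \<Rightarrow> nat) \<times> ('v \<Rightarrow> nat) \<Rightarrow> 'v \<Rightarrow> nat \<times> nat" where
  "labelB V = (\<lambda>(P, \<alpha>, \<beta>). restrict (\<lambda>v. (\<alpha> (block_of P v), \<beta> v)) V)"

definition unlabelB :: "'v set \<Rightarrow> ('v \<times> 'v) set \<Rightarrow> ('v \<Rightarrow> nat \<times> nat)
    \<Rightarrow> 'v set set \<times> ('v set \<Rightarrow> nat) \<times> ('v \<Rightarrow> nat)" where
  "unlabelB V E l = (let P = level_components V E (fst \<circ> l) in
     (P, restrict (\<lambda>B. fst (l (SOME v. v \<in> B))) P, restrict (snd \<circ> l) V))"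

lemma setB_E:
  assumes "(P, \<alpha>, \<beta>) \<in> setB V E"
  obtains r t where "partition_on V P" "\<And>B. B \<in> P \<Longrightarrow> block_connected E B"
    "surj_onto P \<alpha> r" "strict_incr P (quot_edges E P) \<alpha>"
    "surj_onto V \<beta> t" "strict_incr V (sub_edges E P) \<beta>"
  using assms unfolding setB_def covering_subforest_def by blast

lemma labelB_at:
  "partition_on V P \<Longrightarrow> B \<in> P \<Longrightarrow> v \<in> B \<Longrightarrow> labelB V (P, \<alpha>, \<beta>) v = (\<alpha> B, \<beta> v)"
  using block_of_eq[of V P B v] partition_onD1[of V P] by (auto simp: labelB_def)

lemma setB_edge_cases:
  assumes EV: "E \<subseteq> V \<times> V" and b: "(P, \<alpha>, \<beta>) \<in> setB V E" and uw: "(u, w) \<in> E"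
    and Bu: "Bu \<in> P" "u \<in> Bu" and Bw: "Bw \<in> P" "w \<in> Bw"
  shows "Bu = Bw \<and> \<beta> u < \<beta> w \<or> Bu \<noteq> Bw \<and> \<alpha> Bu < \<alpha> Bw"
proof (cases "Bu = Bw")
  case True
  obtain t where "strict_incr V (sub_edges E P) \<beta>" using b by (rule setB_E)
  moreover have "sub_edges E P \<subseteq> V \<times> V" using EV by (auto simp: sub_edges_def)
  moreover have "(u, w) \<in> sub_edges E P" using uw Bu Bw True by (auto simp: sub_edges_def)
  ultimately show ?thesis using True by (auto simp: strict_incr_iff_edges)
next
  case False
  obtain r where "strict_incr P (quot_edges E P) \<alpha>" using b by (rule setB_E)
  moreover have "quot_edges E P \<subseteq> P \<times> P" by (auto simp: quot_edges_def)
  moreover have "(Bu, Bw) \<in> quot_edges E P" using uw Bu Bw False by (auto simp: quot_edges_def)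
  ultimately show ?thesis using False by (auto simp: strict_incr_iff_edges)
qed

lemma labelB_in_lex_labellings:
  assumes EV: "E \<subseteq> V \<times> V" and b: "(P, \<alpha>, \<beta>) \<in> setB V E"
  shows "labelB V (P, \<alpha>, \<beta>) \<in> lex_labellings V E"
proof -
  obtain r t where P: "partition_on V P" and \<alpha>: "surj_onto P \<alpha> r" and \<beta>: "surj_onto V \<beta> t"
    using b by (rule setB_E)
  define l where "l = labelB V (P, \<alpha>, \<beta>)"
  have l: "l v = (\<alpha> B, \<beta> v)" if "B \<in> P" "v \<in> B" for B v
    using labelB_at[OF P that] by (simp add: l_def)
  have block: "\<exists>B\<in>P. v \<in> B" if "v \<in> V" for v
    using that partition_onD1[OF P] by blast
  have "fst ` l ` V = \<alpha> ` P"
    unfolding image_image by (rule image_partition_on_eq[OF P, symmetric]) (simp add: l)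
  moreover have "snd ` l ` V = \<beta> ` V"
    unfolding image_image by (simp add: l_def labelB_def cong: image_cong)
  moreover have "l u < l w" if uw: "(u, w) \<in> E" for u w
  proof -
    obtain Bu Bw where "Bu \<in> P" "u \<in> Bu" "Bw \<in> P" "w \<in> Bw"
      using block uw EV by blast
    then show ?thesis
      using setB_edge_cases[OF EV b uw] l by fastforce
  qed
  moreover have "l \<in> extensional V" by (simp add: l_def labelB_def)
  ultimately show ?thesis
    unfolding l_def[symmetric] using surj_onto_image[OF \<alpha>] surj_onto_image[OF \<beta>]
    by (intro lex_labellingsI) auto
qed

lemma fst_some_level_component:
  assumes "B \<in> level_components V E (fst \<circ> l)" "v \<in> B"
  shows "fst (l (SOME v. v \<in> B)) = fst (l v)"
  using level_components_const[OF assms(1) someI[of "\<lambda>v. v \<in> B", OF assms(2)] assms(2)] by simp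

lemma unlabelB_labelB:
  assumes EV: "E \<subseteq> V \<times> V" and b: "(P, \<alpha>, \<beta>) \<in> setB V E"
  shows "unlabelB V E (labelB V (P, \<alpha>, \<beta>)) = (P, \<alpha>, \<beta>)"
proof -
  obtain r t where P: "partition_on V P" and conn: "\<And>B. B \<in> P \<Longrightarrow> block_connected E B"
    and \<alpha>: "surj_onto P \<alpha> r" and \<beta>: "surj_onto V \<beta> t"
    using b by (elim setB_E) blast
  define l where "l = labelB V (P, \<alpha>, \<beta>)"
  have l: "l v = (\<alpha> B, \<beta> v)" if "B \<in> P" "v \<in> B" for B v
    using labelB_at[OF P that] by (simp add: l_def)
  have block: "\<exists>B\<in>P. v \<in> B" if "v \<in> V" for v
    using that partition_onD1[OF P] by blast
  have comps: "level_components V E (fst \<circ> l) = P"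
  proof (rule level_components_eq_partition[OF P conn])
    show "(fst \<circ> l) u = (fst \<circ> l) w" if "B \<in> P" "u \<in> B" "w \<in> B" for B u w
      using that l by simp
    show "\<exists>B\<in>P. u \<in> B \<and> w \<in> B" if uw: "(u, w) \<in> E" and eq: "(fst \<circ> l) u = (fst \<circ> l) w" for u w
    proof -
      obtain Bu Bw where B: "Bu \<in> P" "u \<in> Bu" "Bw \<in> P" "w \<in> Bw"
        using block uw EV by blast
      then show ?thesis
        using setB_edge_cases[OF EV b uw B] eq l by fastforce
    qed
  qed
  have "restrict (\<lambda>B. fst (l (SOME v. v \<in> B))) P = restrict \<alpha> P"
  proof (rule restrict_ext)
    fix B assume "B \<in> P"
    then obtain v where "v \<in> B" using partition_onD3[OF P] by (metis ex_in_conv)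
    then show "fst (l (SOME v. v \<in> B)) = \<alpha> B"
      using fst_some_level_component[of B V E l v] comps \<open>B \<in> P\<close> l by simp
  qed
  moreover have "restrict (snd \<circ> l) V = restrict \<beta> V"
    by (rule restrict_ext) (simp add: l_def labelB_def)
  ultimately show ?thesis
    unfolding l_def[symmetric] unlabelB_def Let_def comps
    using surj_onto_restrict[OF \<alpha>] surj_onto_restrict[OF \<beta>] by simp
qed

lemma unlabelB_in_setB:
  assumes EV: "E \<subseteq> V \<times> V" and ne: "V \<noteq> {}" and l: "l \<in> lex_labellings V E"
  shows "unlabelB V E l \<in> setB V E"
proof -
  obtain r t where img: "fst ` l ` V = {1..r}" "snd ` l ` V = {1..t}"
    and edge: "\<And>u w. (u, w) \<in> E \<Longrightarrow> l u < l w"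
    using l by (elim lex_labellingsE) blast
  define P where "P = level_components V E (fst \<circ> l)"
  define \<alpha> where "\<alpha> = restrict (\<lambda>B. fst (l (SOME v. v \<in> B))) P"
  define \<beta> where "\<beta> = restrict (snd \<circ> l) V"
  have unl: "unlabelB V E l = (P, \<alpha>, \<beta>)"
    by (simp add: unlabelB_def Let_def P_def \<alpha>_def \<beta>_def)
  have part: "partition_on V P" unfolding P_def by (rule partition_on_level_components)
  have \<alpha>_eq: "\<alpha> B = fst (l v)" if "B \<in> P" "v \<in> B" for B v
    using that fst_some_level_component[of B V E l v] by (simp add: \<alpha>_def P_def)
  have quot_sub: "quot_edges E P \<subseteq> P \<times> P" by (auto simp: quot_edges_def)
  have sub_sub: "sub_edges E P \<subseteq> V \<times> V" using EV by (auto simp: sub_edges_def)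
  have "covering_subforest V E P"
    unfolding covering_subforest_def using part level_components_connected[OF EV] unfolding P_def by blast
  moreover have "surj_onto P \<alpha> r"
  proof -
    have "\<alpha> ` P = fst ` l ` V" unfolding image_image by (rule image_partition_on_eq[OF part \<alpha>_eq])
    then show ?thesis unfolding \<alpha>_def using img(1) by (simp add: surj_onto_restrictI)
  qed
  moreover have "surj_onto V \<beta> t"
    unfolding \<beta>_def using img(2) by (simp add: surj_onto_restrictI image_comp)
  moreover have "r \<ge> 1" "t \<ge> 1" using img ne by auto
  moreover have "strict_incr P (quot_edges E P) \<alpha>"
    unfolding strict_incr_iff_edges[OF quot_sub] unfolding quot_edges_def
  proof clarify
    fix B1 B2 u w assume B: "B1 \<in> P" "B2 \<in> P" "B1 \<noteq> B2" "u \<in> B1" "w \<in> B2" and uw: "(u, w) \<in> E"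
    have "fst (l u) \<noteq> fst (l w)"
    proof
      assume "fst (l u) = fst (l w)"
      then have "w \<in> B1"
        using level_components_closed[OF EV B(1)[unfolded P_def] B(4)] uw by (simp add: level_edges_def)
      then show False using partition_on_block_unique[OF part B(1,2) _ B(5)] B(3) by blast
    qed
    then show "\<alpha> B1 < \<alpha> B2"
      using edge[OF uw] \<alpha>_eq B by (auto simp: less_prod_def')
  qed
  moreover have "strict_incr V (sub_edges E P) \<beta>"
    unfolding strict_incr_iff_edges[OF sub_sub] unfolding sub_edges_def
  proof clarify
    fix u w B assume uw: "(u, w) \<in> E" and B: "B \<in> P" "u \<in> B" "w \<in> B"
    then show "\<beta> u < \<beta> w"
      using edge[OF uw] \<alpha>_eq[OF B(1,2)] \<alpha>_eq[OF B(1,3)] EV by (auto simp: less_prod_def' \<beta>_def)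
  qed
  ultimately show ?thesis unfolding unl setB_def by blast
qed

lemma labelB_unlabelB:
  assumes l: "l \<in> lex_labellings V E"
  shows "labelB V (unlabelB V E l) = l"
proof
  fix v
  define P where "P = level_components V E (fst \<circ> l)"
  have part: "partition_on V P" unfolding P_def by (rule partition_on_level_components)
  show "labelB V (unlabelB V E l) v = l v"
  proof (cases "v \<in> V")
    case True
    then obtain B where B: "B \<in> P" "v \<in> B" using partition_onD1[OF part] by blast
    then show ?thesis
      using labelB_at[OF part B] fst_some_level_component[of B V E l v] True
      by (simp add: unlabelB_def Let_def P_def[symmetric])
  next
    case False
    moreover have "l \<in> extensional V" using l by (elim lex_labellingsE)
    ultimately show ?thesis by (simp add: labelB_def unlabelB_def Let_def extensional_def)
  qed
qed

lemma bij_betw_unlabelB: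
  assumes EV: "E \<subseteq> V \<times> V" and ne: "V \<noteq> {}"
  shows "bij_betw (unlabelB V E) (lex_labellings V E) (setB V E)"
proof (rule bij_betw_byWitness[where f' = "labelB V"])
  show "\<forall>l\<in>lex_labellings V E. labelB V (unlabelB V E l) = l"
    using labelB_unlabelB by blast
  show "\<forall>b\<in>setB V E. unlabelB V E (labelB V b) = b"
    using unlabelB_labelB[OF EV] by fast
  show "unlabelB V E ` lex_labellings V E \<subseteq> setB V E"
    using unlabelB_in_setB[OF EV ne] by blast
  show "labelB V ` setB V E \<subseteq> lex_labellings V E"
    using labelB_in_lex_labellings[OF EV] by fast
qed

lemma words_labelB:
  assumes fin: "finite V" and b: "(P, \<alpha>, \<beta>) \<in> setB V E"
  shows "word P (osum d) \<alpha> = word V d (fst \<circ> labelB V (P, \<alpha>, \<beta>))"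
    and "word V d \<beta> = word V d (snd \<circ> labelB V (P, \<alpha>, \<beta>))"
proof -
  obtain P_part: "partition_on V P" using b by (elim setB_E) blast
  show "word P (osum d) \<alpha> = word V d (fst \<circ> labelB V (P, \<alpha>, \<beta>))"
    by (rule word_partition[OF fin P_part, symmetric]) (simp add: labelB_at[OF P_part])
  show "word V d \<beta> = word V d (snd \<circ> labelB V (P, \<alpha>, \<beta>))"
    by (rule word_cong) (simp add: labelB_def)
qed

theorem lemma5p2:
  fixes V :: "'v set" and E :: "('v \<times> 'v) set" and d :: "'v \<Rightarrow> 'o::ab_semigroup_add"
  assumes "rforest V E" and "V \<noteq> {}"
  shows "\<exists>\<Phi>. bij_betw \<Phi> (setA V E) (setB V E) \<and>
    (\<forall>\<sigma> \<tau> \<rho> P \<alpha> \<beta>. (\<sigma>, \<tau>, \<rho>) \<in> setA V E \<and> \<Phi> (\<sigma>, \<tau>, \<rho>) = (P, \<alpha>, \<beta>) \<longrightarrow>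
       word V d (\<tau> \<circ> \<sigma>) = word P (osum d) \<alpha> \<and>
       word V d (\<rho> \<circ> \<sigma>) = word V d \<beta>)"
proof (intro exI conjI allI impI)
  have EV: "E \<subseteq> V \<times> V" and fin: "finite V" using assms(1) unfolding rforest_def by auto
  show "bij_betw (unlabelB V E \<circ> labelA V) (setA V E) (setB V E)"
    using bij_betw_trans[OF bij_betw_labelA[OF EV fin assms(2)] bij_betw_unlabelB[OF EV assms(2)]] .
  fix \<sigma> \<tau> \<rho> P \<alpha> \<beta>
  assume "(\<sigma>, \<tau>, \<rho>) \<in> setA V E \<and> (unlabelB V E \<circ> labelA V) (\<sigma>, \<tau>, \<rho>) = (P, \<alpha>, \<beta>)"
  then have a: "(\<sigma>, \<tau>, \<rho>) \<in> setA V E" and \<Phi>: "unlabelB V E (labelA V (\<sigma>, \<tau>, \<rho>)) = (P, \<alpha>, \<beta>)"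
    by simp_all
  let ?l = "labelA V (\<sigma>, \<tau>, \<rho>)"
  have l: "?l \<in> lex_labellings V E" by (rule labelA_in_lex_labellings[OF EV a])
  have b: "(P, \<alpha>, \<beta>) \<in> setB V E" using unlabelB_in_setB[OF EV assms(2) l] \<Phi> by simp
  have lab: "labelB V (P, \<alpha>, \<beta>) = ?l" using labelB_unlabelB[OF l] \<Phi> by simp
  have "word V d (\<tau> \<circ> \<sigma>) = word V d (fst \<circ> ?l)" by (rule word_cong) (simp add: labelA_def)
  also have "\<dots> = word P (osum d) \<alpha>" unfolding lab[symmetric] by (rule words_labelB(1)[OF fin b, symmetric])
  finally show "word V d (\<tau> \<circ> \<sigma>) = word P (osum d) \<alpha>" .
  have "word V d (\<rho> \<circ> \<sigma>) = word V d (snd \<circ> ?l)" by (rule word_cong) (simp add: labelA_def)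
  also have "\<dots> = word V d \<beta>" unfolding lab[symmetric] by (rule words_labelB(2)[OF fin b, symmetric])
  finally show "word V d (\<rho> \<circ> \<sigma>) = word V d \<beta>" .
qed

end
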